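(* Structural embeddings with $\mathrm{LPE}$ as node-level positional encoding and embedding dimension $d$ are sufficiently node- and adjacency-identifying, irrespective of whether the underlying Laplacian is normalized or not. Further, for graphs with $n$ nodes, the statement holds for $d\ge 2n+1$.
   Context: Graphs $G$ are finite, undirected, without self-loops and without isolated nodes, with $n$ nodes, adjacency matrix $\mathbf{A}(G)$, degree matrix $\mathbf{D}$. Laplacian $\mathbf{L}=\mathbf{D}-\mathbf{A}(G)$; normalized Laplacian $\mathbf{I}-\mathbf{D}^{-1/2}\mathbf{A}(G)\mathbf{D}^{-1/2}$. Let $\lambda=(\lambda_1,\dots,\lambda_l)^T$ be the $l$ smallest (possibly repeated) eigenvalues and $\mathbf{V}\in\mathbb{R}^{n\times l}$ corresponding orthonormal eigenvectors as columns. $\mathrm{LPE}(\mathbf{V},\lambda)=\rho\big([\phi(\mathbf{V}^T_1,\lambda+\epsilon)\cdots\phi(\mathbf{V}^T_n,\lambda+\epsilon)]\big)$, with $\epsilon\in\mathbb{R}^l$ a learnable zero-initialized vector, $\phi\colon\mathbb{R}^2\to\mathbb{R}^d$ an FFN applied to each pair $(\mathbf{V}_{ij},\lambda_j+\epsilon_j)$, and $\rho\colon\mathbb{R}^{l\times d}\to\mathbb{R}^d$ a permutation-equivariant network applied per node (e.g. sum followed by an FFN), giving $\mathrm{emb}_{PE}(v)$ per node. Structural embeddings: $\mathbf{P}(v)=\mathsf{FFN}(\mathrm{emb}_{\deg}(v)+\mathrm{emb}_{PE}(v))\in\mathbb{R}^d$, $\mathrm{emb}_{\deg}$ a learnable degree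 embedding, $\mathsf{FFN}$ an MLP. For $\mathbf{P}\in\mathbb{R}^{n\times d}$ and $\mathbf{W}^Q,\mathbf{W}^K\in\mathbb{R}^{d\times d}$ let $\tilde{\mathbf{P}}=\frac{1}{\sqrt{d_k}}\mathbf{P}\mathbf{W}^Q(\mathbf{P}\mathbf{W}^K)^T$. $\mathbf{P}$ is node-identifying if for some $\mathbf{W}^Q,\mathbf{W}^K$: $\tilde{\mathbf{P}}_{ij}=\max_k\tilde{\mathbf{P}}_{ik}\iff i=j$; adjacency-identifying if for some $\mathbf{W}^Q,\mathbf{W}^K$: $\tilde{\mathbf{P}}_{ij}=\max_k\tilde{\mathbf{P}}_{ik}\iff\mathbf{A}(G)_{ij}=1$. Parametrized structural embeddings are sufficiently node-identifying (resp. adjacency-identifying) if there is a node-identifying (resp. adjacency-identifying) $\mathbf{P}$ such that for every $\varepsilon>0$ some parameter choice yields embeddings $\mathbf{Q}$ with $\|\mathbf{P}-\mathbf{Q}\|_F<\varepsilon$. *)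

theory Defs
  imports Complex_Main "Jordan_Normal_Form.Matrix"
begin

definition is_graph :: "nat \<Rightarrow> real mat \<Rightarrow> bool" where
  "is_graph n A \<longleftrightarrow> A \<in> carrier_mat n n
     \<and> (\<forall>i<n. \<forall>j<n. A $$ (i,j) = 0 \<or> A $$ (i,j) = 1)
     \<and> (\<forall>i<n. \<forall>j<n. A $$ (i,j) = A $$ (j,i))
     \<and> (\<forall>i<n. A $$ (i,i) = 0)
     \<and> (\<forall>i<n. \<exists>j<n. A $$ (i,j) = 1)"

definition gdeg :: "real mat \<Rightarrow> nat \<Rightarrow> nat" where
  "gdeg A i = card {j. j < dim_row A \<and> A $$ (i,j) = 1}"

definition laplacian :: "real mat \<Rightarrow> real mat" where
  "laplacian A = mat (dim_row A) (dim_row A)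
     (\<lambda>(i,j). (if i = j then real (gdeg A i) else 0) - A $$ (i,j))"

definition norm_laplacian :: "real mat \<Rightarrow> real mat" where
  "norm_laplacian A = mat (dim_row A) (dim_row A)
     (\<lambda>(i,j). (if i = j then 1 else 0)
        - A $$ (i,j) / (sqrt (real (gdeg A i)) * sqrt (real (gdeg A j))))"

definition lap :: "bool \<Rightarrow> real mat \<Rightarrow> real mat" where
  "lap normalized A = (if normalized then norm_laplacian A else laplacian A)"

definition diag_of :: "real vec \<Rightarrow> real mat" where
  "diag_of v = mat (dim_vec v) (dim_vec v) (\<lambda>(i,j). if i = j then v $ i else 0)"

(* V (n x l) has orthonormal columns which are eigenvectors of L for the eigenvalues
   lam (in ascending order), and lam are the l smallest eigenvalues (with multiplicity) *)
definition is_eigdecomp :: "real mat \<Rightarrow> nat \<Rightarrow> real mat \<Rightarrow> real vec \<Rightarrow> bool" where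
  "is_eigdecomp L l V lam \<longleftrightarrow> (let n = dim_row L in
       V \<in> carrier_mat n l \<and> lam \<in> carrier_vec l \<and> l \<le> n
     \<and> transpose_mat V * V = 1\<^sub>m l
     \<and> L * V = V * diag_of lam
     \<and> (\<forall>i j. i \<le> j \<longrightarrow> j < l \<longrightarrow> lam $ i \<le> lam $ j)
     \<and> (\<forall>x. x \<in> carrier_vec n \<longrightarrow> x \<noteq> 0\<^sub>v n \<longrightarrow>
           (\<forall>i<l. x \<bullet> col V i = 0) \<longrightarrow> (\<forall>\<mu>. L *\<^sub>v x = \<mu> \<cdot>\<^sub>v x \<longrightarrow>
             (\<forall>i<l. lam $ i \<le> \<mu>))))"

definition relu :: "real vec \<Rightarrow> real vec" where
  "relu v = map_vec (\<lambda>t. max 0 t) v"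

fun mlp_eval :: "(real mat \<times> real vec) list \<Rightarrow> real vec \<Rightarrow> real vec" where
  "mlp_eval [] x = x"
| "mlp_eval [(W,b)] x = W *\<^sub>v x + b"
| "mlp_eval ((W,b) # rest) x = mlp_eval rest (relu (W *\<^sub>v x + b))"

fun mlp_wf :: "(real mat \<times> real vec) list \<Rightarrow> nat \<Rightarrow> nat \<Rightarrow> bool" where
  "mlp_wf [] din dout = False"
| "mlp_wf [(W,b)] din dout = (W \<in> carrier_mat dout din \<and> b \<in> carrier_vec dout)"
| "mlp_wf ((W,b) # rest) din dout =
     (\<exists>h. W \<in> carrier_mat h din \<and> b \<in> carrier_vec h \<and> mlp_wf rest h dout)"

(* emb_PE(v) = rho([phi(V_v1, lam_1+eps_1) ... phi(V_vl, lam_l+eps_l)]),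
   with rho = sum over the l rows followed by an FFN *)
definition lpe_emb :: "nat \<Rightarrow> (real mat \<times> real vec) list \<Rightarrow> (real mat \<times> real vec) list
      \<Rightarrow> real vec \<Rightarrow> real mat \<Rightarrow> real vec \<Rightarrow> nat \<Rightarrow> real vec" where
  "lpe_emb d phi rho eps V lam v =
     mlp_eval rho (vec d (\<lambda>k. \<Sum>j<dim_col V.
        mlp_eval phi (vec 2 (\<lambda>t. if t = 0 then V $$ (v,j) else lam $ j + eps $ j)) $ k))"

definition struct_emb :: "nat \<Rightarrow> real mat \<Rightarrow> real mat \<Rightarrow> real vec
      \<Rightarrow> (real mat \<times> real vec) list \<Rightarrow> (real mat \<times> real vec) list \<Rightarrow> real vec
      \<Rightarrow> (nat \<Rightarrow> real vec) \<Rightarrow> (real mat \<times> real vec) list \<Rightarrow> real mat" where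
  "struct_emb d A V lam phi rho eps degemb ffn =
     mat (dim_row A) d (\<lambda>(v,k).
        mlp_eval ffn (degemb (gdeg A v) + lpe_emb d phi rho eps V lam v) $ k)"

definition lpe_params_wf :: "nat \<Rightarrow> nat \<Rightarrow> (real mat \<times> real vec) list \<Rightarrow> (real mat \<times> real vec) list
      \<Rightarrow> real vec \<Rightarrow> (nat \<Rightarrow> real vec) \<Rightarrow> (real mat \<times> real vec) list \<Rightarrow> bool" where
  "lpe_params_wf d l phi rho eps degemb ffn \<longleftrightarrow>
     mlp_wf phi 2 d \<and> mlp_wf rho d d \<and> eps \<in> carrier_vec l
     \<and> (\<forall>k. degemb k \<in> carrier_vec d) \<and> mlp_wf ffn d d"

definition ptilde :: "real mat \<Rightarrow> real mat \<Rightarrow> real mat \<Rightarrow> real mat" where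
  "ptilde P WQ WK = (1 / sqrt (real (dim_col P))) \<cdot>\<^sub>m ((P * WQ) * transpose_mat (P * WK))"

definition row_max :: "real mat \<Rightarrow> nat \<Rightarrow> real" where
  "row_max M i = Max {M $$ (i,k) | k. k < dim_col M}"

definition node_identifying :: "real mat \<Rightarrow> bool" where
  "node_identifying P \<longleftrightarrow> (\<exists>WQ WK. WQ \<in> carrier_mat (dim_col P) (dim_col P)
     \<and> WK \<in> carrier_mat (dim_col P) (dim_col P)
     \<and> (\<forall>i<dim_row P. \<forall>j<dim_row P.
          ptilde P WQ WK $$ (i,j) = row_max (ptilde P WQ WK) i \<longleftrightarrow> i = j))"

definition adjacency_identifying :: "real mat \<Rightarrow> real mat \<Rightarrow> bool" where
  "adjacency_identifying A P \<longleftrightarrow> (\<exists>WQ WK. WQ \<in> carrier_mat (dim_col P) (dim_col P)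
     \<and> WK \<in> carrier_mat (dim_col P) (dim_col P)
     \<and> (\<forall>i<dim_row P. \<forall>j<dim_row P.
          ptilde P WQ WK $$ (i,j) = row_max (ptilde P WQ WK) i \<longleftrightarrow> A $$ (i,j) = 1))"

definition frob_norm :: "real mat \<Rightarrow> real" where
  "frob_norm M = sqrt (\<Sum>i<dim_row M. \<Sum>j<dim_col M. (M $$ (i,j))\<^sup>2)"

definition sufficiently :: "(real mat \<Rightarrow> bool) \<Rightarrow> nat \<Rightarrow> real mat \<Rightarrow> real mat \<Rightarrow> real vec \<Rightarrow> bool" where
  "sufficiently Prop d A V lam \<longleftrightarrow>
     (\<exists>P. P \<in> carrier_mat (dim_row A) d \<and> Prop P \<and>
        (\<forall>e>0. \<exists>phi rho eps degemb ffn.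
           lpe_params_wf d (dim_col V) phi rho eps degemb ffn
           \<and> frob_norm (P - struct_emb d A V lam phi rho eps degemb ffn) < e))"

end

(* The target embedding is P = [V | 0], the orthogonal eigenvector matrix padded with zero
   columns to width d, and the LPE realizes it exactly. Choosing eps_j = j - lam_j feeds phi the
   column index j instead of the eigenvalue; a two-layer ReLU network phi then sends (V_vj, j) to
   the vector whose k-th entry is V_vj + 2 if j = k, 4 if j > k and 0 if j < k (here |V_vj| <= 1
   matters), so summing over j gives V_vk plus a constant, which the final FFN subtracts.
   Because P P^T = V V^T = I, taking W^Q = P^T M P and W^K = I makes the attention scores equal
   M / sqrt d for any n x n matrix M; M = I and M = A give node- and adjacency-identification. *)

theory Submission
  imports Defs "Jordan_Normal_Form.Determinant"
begin

lemma abs_entry_le_1_if_orthonormal_cols: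
  fixes V :: "real mat"
  assumes V: "V \<in> carrier_mat n l" and orth: "transpose_mat V * V = 1\<^sub>m l"
    and ij: "i < n" "j < l"
  shows "\<bar>V $$ (i,j)\<bar> \<le> 1"
proof -
  have "(\<Sum>t<n. (V $$ (t,j))\<^sup>2) = (transpose_mat V * V) $$ (j,j)"
    using V ij by (simp add: scalar_prod_def lessThan_atLeast0 power2_eq_square)
  also have "\<dots> = 1" using orth ij by simp
  finally have "(V $$ (i,j))\<^sup>2 \<le> 1"
    using member_le_sum[of i "{..<n}" "\<lambda>t. (V $$ (t,j))\<^sup>2"] ij by simp
  then show ?thesis by (simp add: abs_square_le_1)
qed

definition pad_cols :: "nat \<Rightarrow> 'a :: zero mat \<Rightarrow> 'a mat" where
  "pad_cols d V = mat (dim_row V) d (\<lambda>(i,k). if k < dim_col V then V $$ (i,k) else 0)"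

lemma pad_cols_mult_transpose:
  fixes V :: "'a :: semiring_0 mat"
  assumes "dim_col V \<le> d"
  shows "pad_cols d V * transpose_mat (pad_cols d V) = V * transpose_mat V"
proof (rule eq_matI)
  fix i j assume "i < dim_row (V * transpose_mat V)" "j < dim_col (V * transpose_mat V)"
  then have ij: "i < dim_row V" "j < dim_row V" by auto
  have "(pad_cols d V * transpose_mat (pad_cols d V)) $$ (i,j)
      = (\<Sum>k<d. if k < dim_col V then V $$ (i,k) * V $$ (j,k) else 0)"
    using ij by (auto simp: pad_cols_def scalar_prod_def lessThan_atLeast0 intro!: sum.cong)
  also have "\<dots> = (\<Sum>k<dim_col V. V $$ (i,k) * V $$ (j,k))"
  proof -
    have "{..<d} \<inter> {k. k < dim_col V} = {..<dim_col V}" using assms by auto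
    then show ?thesis by (simp add: sum.If_cases)
  qed
  also have "\<dots> = (V * transpose_mat V) $$ (i,j)"
    using ij by (simp add: scalar_prod_def lessThan_atLeast0)
  finally show "(pad_cols d V * transpose_mat (pad_cols d V)) $$ (i,j) = (V * transpose_mat V) $$ (i,j)" .
qed (auto simp: pad_cols_def)

lemma ptilde_sandwich_row_orthonormal:
  fixes P M :: "real mat"
  assumes P: "P \<in> carrier_mat n d" and PPt: "P * transpose_mat P = 1\<^sub>m n"
    and M: "M \<in> carrier_mat n n"
  shows "ptilde P (transpose_mat P * M * P) (1\<^sub>m d) = (1 / sqrt (real d)) \<cdot>\<^sub>m M"
proof -
  have Pt: "transpose_mat P \<in> carrier_mat d n" using P by simp
  have PtM: "transpose_mat P * M \<in> carrier_mat d n" using Pt M by simp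
  have X: "transpose_mat P * M * P \<in> carrier_mat d d" using PtM P by simp
  have "P * (transpose_mat P * M * P) * transpose_mat (P * 1\<^sub>m d)
      = P * ((transpose_mat P * M * P) * transpose_mat P)"
    using P assoc_mult_mat[OF P X Pt] by simp
  also have "(transpose_mat P * M * P) * transpose_mat P = (transpose_mat P * M) * (P * transpose_mat P)"
    by (rule assoc_mult_mat[OF PtM P Pt])
  also have "\<dots> = transpose_mat P * M" using PPt right_mult_one_mat[OF PtM] by simp
  also have "P * (transpose_mat P * M) = (P * transpose_mat P) * M"
    by (rule assoc_mult_mat[OF P Pt M, symmetric])
  also have "\<dots> = M" using PPt M by simp
  finally show ?thesis using P by (simp add: ptilde_def)
qed

lemma smult_zero_one_row_max_iff:
  fixes M :: "real mat"
  assumes "c > 0" "M \<in> carrier_mat m n" "i < m" "j < n"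
    and zero_one: "\<forall>k<n. M $$ (i,k) = 0 \<or> M $$ (i,k) = 1" and one: "\<exists>k<n. M $$ (i,k) = 1"
  shows "(c \<cdot>\<^sub>m M) $$ (i,j) = row_max (c \<cdot>\<^sub>m M) i \<longleftrightarrow> M $$ (i,j) = 1"
proof -
  have "row_max (c \<cdot>\<^sub>m M) i = c"
    unfolding row_max_def
  proof (rule Max_eqI)
    show "y \<le> c" if "y \<in> {(c \<cdot>\<^sub>m M) $$ (i,k) | k. k < dim_col (c \<cdot>\<^sub>m M)}" for y
      using that assms zero_one by force
    from one obtain k where "k < n" "M $$ (i,k) = 1" by blast
    then show "c \<in> {(c \<cdot>\<^sub>m M) $$ (i,k) | k. k < dim_col (c \<cdot>\<^sub>m M)}"
      using assms by (auto intro!: exI[of _ k])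
  qed simp
  then show ?thesis using assms zero_one by auto
qed

lemma ptilde_argmax_pattern_if_row_orthonormal:
  fixes P M :: "real mat"
  assumes P: "P \<in> carrier_mat n d" and PPt: "P * transpose_mat P = 1\<^sub>m n" and "0 < d"
    and M: "M \<in> carrier_mat n n"
    and zero_one: "\<forall>i<n. \<forall>j<n. M $$ (i,j) = 0 \<or> M $$ (i,j) = 1"
    and row_one: "\<forall>i<n. \<exists>j<n. M $$ (i,j) = 1"
  shows "\<exists>WQ WK. WQ \<in> carrier_mat d d \<and> WK \<in> carrier_mat d d \<and>
    (\<forall>i<n. \<forall>j<n. ptilde P WQ WK $$ (i,j) = row_max (ptilde P WQ WK) i \<longleftrightarrow> M $$ (i,j) = 1)"
proof (intro exI conjI allI impI)
  show "transpose_mat P * M * P \<in> carrier_mat d d" "1\<^sub>m d \<in> carrier_mat d d"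
    using P M by auto
  fix i j assume "i < n" "j < n"
  then show "ptilde P (transpose_mat P * M * P) (1\<^sub>m d) $$ (i,j)
      = row_max (ptilde P (transpose_mat P * M * P) (1\<^sub>m d)) i \<longleftrightarrow> M $$ (i,j) = 1"
    unfolding ptilde_sandwich_row_orthonormal[OF P PPt M]
    using smult_zero_one_row_max_iff[OF _ M] zero_one row_one \<open>0 < d\<close> by simp
qed

lemma node_identifying_if_row_orthonormal:
  fixes P :: "real mat"
  assumes "P \<in> carrier_mat n d" "P * transpose_mat P = 1\<^sub>m n" "0 < d"
  shows "node_identifying P"
proof -
  have zero_one: "\<forall>i<n. \<forall>j<n. (1\<^sub>m n :: real mat) $$ (i,j) = 0 \<or> 1\<^sub>m n $$ (i,j) = 1"
    by simp
  have "\<forall>i<n. (1\<^sub>m n :: real mat) $$ (i,i) = 1" by simp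
  then have row_one: "\<forall>i<n. \<exists>j<n. (1\<^sub>m n :: real mat) $$ (i,j) = 1" by blast
  have "\<exists>WQ WK. WQ \<in> carrier_mat d d \<and> WK \<in> carrier_mat d d \<and>
    (\<forall>i<n. \<forall>j<n. ptilde P WQ WK $$ (i,j) = row_max (ptilde P WQ WK) i
       \<longleftrightarrow> (1\<^sub>m n :: real mat) $$ (i,j) = 1)"
    by (rule ptilde_argmax_pattern_if_row_orthonormal[OF assms one_carrier_mat zero_one row_one])
  moreover have "(if i = j then 1 else 0 :: real) = 1 \<longleftrightarrow> i = j" for i j :: nat by simp
  ultimately show ?thesis using assms(1) by (simp add: node_identifying_def)
qed

lemma adjacency_identifying_if_row_orthonormal:
  fixes P :: "real mat"
  assumes "P \<in> carrier_mat n d" "P * transpose_mat P = 1\<^sub>m n" "0 < d" and G: "is_graph n A"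
  shows "adjacency_identifying A P"
  using ptilde_argmax_pattern_if_row_orthonormal[OF assms(1-3), of A] assms(1) G
  unfolding adjacency_identifying_def is_graph_def by auto

definition staircase_phi :: "nat \<Rightarrow> nat \<Rightarrow> (real mat \<times> real vec) list" where
  "staircase_phi n d =
     [(mat (n+1) 2 (\<lambda>(h,t). if t = 0 then 1 else 4), vec (n+1) (\<lambda>h. 2 - 4 * real h)),
      (mat d (n+1) (\<lambda>(k,h). if k < n \<and> h = k then 1 else if k < n \<and> h = Suc k then -1 else 0),
       0\<^sub>v d)]"

lemma staircase_phi_eval:
  assumes "k < d"
  shows "mlp_eval (staircase_phi n d) (vec 2 (\<lambda>t. if t = 0 then x else y)) $ k
    = (if k < n then max 0 (x + 4 * (y - real k) + 2) - max 0 (x + 4 * (y - real k) - 2) else 0)"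
proof -
  define r where "r h = max 0 (x + 4 * (y - real h) + 2)" for h
  have hidden: "relu (mat (n+1) 2 (\<lambda>(h,t). if t = 0 then 1 else 4)
        *\<^sub>v vec 2 (\<lambda>t. if t = 0 then x else y)
      + vec (n+1) (\<lambda>h. 2 - 4 * real h)) = vec (n+1) r"
    by (rule eq_vecI) (auto simp: relu_def r_def scalar_prod_def numeral_2_eq_2 lessThan_Suc
        algebra_simps)
  have "mlp_eval (staircase_phi n d) (vec 2 (\<lambda>t. if t = 0 then x else y)) $ k
      = (\<Sum>h<n+1. (if k < n \<and> h = k then 1 else if k < n \<and> h = Suc k then -1 else 0) * r h)"
    unfolding staircase_phi_def mlp_eval.simps hidden
    using assms by (simp add: scalar_prod_def lessThan_atLeast0)
  also have "\<dots> = (if k < n then r k - r (Suc k) else 0)"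
  proof (cases "k < n")
    case True
    then have "(\<Sum>h<n+1. (if k < n \<and> h = k then 1 else if k < n \<and> h = Suc k then -1 else 0) * r h)
        = (\<Sum>h<n+1. (if h = k then r h else 0) - (if h = Suc k then r h else 0))"
      by (intro sum.cong) auto
    also have "\<dots> = r k - r (Suc k)" using True by (simp add: sum_subtractf)
    finally show ?thesis using True by simp
  qed simp
  finally show ?thesis by (simp add: r_def algebra_simps)
qed

lemma staircase_phi_eval_index:
  assumes "k < d" "\<bar>x\<bar> \<le> 1"
  shows "mlp_eval (staircase_phi n d) (vec 2 (\<lambda>t. if t = 0 then x else real j)) $ k
    = (if k < n \<and> j = k then x + 2 else if k < n \<and> k < j then 4 else 0)"
proof -
  consider "j = k" | "k < j" | "j < k" by linarith
  then have "max 0 (x + 4 * (real j - real k) + 2) - max 0 (x + 4 * (real j - real k) - 2)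
      = (if j = k then x + 2 else if k < j then 4 else 0)"
    by cases (use assms(2) in auto)
  then show ?thesis using staircase_phi_eval[OF assms(1)] by auto
qed

lemma sum_staircase_index:
  fixes x :: real
  assumes "k < n"
  shows "(\<Sum>j<n. if j = k then x + 2 else if k < j then 4 else 0) = x + 4 * real (n - k) - 2"
proof -
  have "(\<Sum>j<n. if j = k then x + 2 else if k < j then 4 else 0)
      = (\<Sum>j<n. if j = k then x + 2 else 0) + (\<Sum>j<n. if j \<in> {Suc k..<n} then 4 else 0)"
    by (subst sum.distrib[symmetric]) (intro sum.cong, auto)
  also have "(\<Sum>j<n. if j \<in> {Suc k..<n} then 4 else 0) = (\<Sum>j\<in>{Suc k..<n}. 4 :: real)"
  proof -
    have "{..<n} \<inter> {Suc k..<n} = {Suc k..<n}" by auto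
    then show ?thesis using sum.inter_restrict[of "{..<n}" "\<lambda>_. 4 :: real" "{Suc k..<n}"] by simp
  qed
  finally show ?thesis using assms by (simp add: of_nat_diff algebra_simps)
qed

definition index_shift :: "nat \<Rightarrow> real vec \<Rightarrow> real vec" where
  "index_shift n lam = vec n (\<lambda>j. real j - lam $ j)"

definition staircase_bias :: "nat \<Rightarrow> nat \<Rightarrow> real vec" where
  "staircase_bias n d = vec d (\<lambda>k. if k < n then 2 - 4 * real (n - k) else 0)"

lemma lpe_emb_staircase:
  assumes "dim_col V = n" "k < d" and bnd: "\<forall>j<n. \<bar>V $$ (i,j)\<bar> \<le> 1"
  shows "lpe_emb d (staircase_phi n d) [(1\<^sub>m d, 0\<^sub>v d)] (index_shift n lam) V lam i $ k
    = (if k < n then V $$ (i,k) + 4 * real (n - k) - 2 else 0)"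
proof -
  have "lpe_emb d (staircase_phi n d) [(1\<^sub>m d, 0\<^sub>v d)] (index_shift n lam) V lam i $ k
      = (\<Sum>j<n. mlp_eval (staircase_phi n d) (vec 2 (\<lambda>t. if t = 0 then V $$ (i,j) else real j)) $ k)"
    using assms
    by (auto simp: lpe_emb_def index_shift_def
        intro!: sum.cong arg_cong[where f = "\<lambda>v. mlp_eval _ v $ k"])
  also have "\<dots> = (\<Sum>j<n. if k < n \<and> j = k then V $$ (i,j) + 2
      else if k < n \<and> k < j then 4 else 0)"
    using bnd staircase_phi_eval_index[OF \<open>k < d\<close>] by (intro sum.cong) auto
  also have "\<dots> = (if k < n then V $$ (i,k) + 4 * real (n - k) - 2 else 0)"
  proof (cases "k < n")
    case True
    then have "(\<Sum>j<n. if k < n \<and> j = k then V $$ (i,j) + 2 else if k < n \<and> k < j then 4 else 0)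
        = (\<Sum>j<n. if j = k then V $$ (i,k) + 2 else if k < j then 4 else 0)"
      by (intro sum.cong) auto
    with True show ?thesis by (simp add: sum_staircase_index)
  qed simp
  finally show ?thesis .
qed

lemma struct_emb_staircase:
  assumes "dim_row A = dim_row V" "dim_col V = n"
    and "\<forall>i<dim_row V. \<forall>j<n. \<bar>V $$ (i,j)\<bar> \<le> 1"
  shows "struct_emb d A V lam (staircase_phi n d) [(1\<^sub>m d, 0\<^sub>v d)] (index_shift n lam)
      (\<lambda>_. 0\<^sub>v d) [(1\<^sub>m d, staircase_bias n d)] = pad_cols d V"
proof (rule eq_matI)
  fix i k assume "i < dim_row (pad_cols d V)" "k < dim_col (pad_cols d V)"
  then have "i < dim_row V" "k < d" by (auto simp: pad_cols_def)
  moreover have "lpe_emb d (staircase_phi n d) [(1\<^sub>m d, 0\<^sub>v d)] (index_shift n lam) V lam i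
      \<in> carrier_vec d"
    by (simp add: lpe_emb_def)
  ultimately show
    "struct_emb d A V lam (staircase_phi n d) [(1\<^sub>m d, 0\<^sub>v d)] (index_shift n lam)
      (\<lambda>_. 0\<^sub>v d) [(1\<^sub>m d, staircase_bias n d)] $$ (i,k) = pad_cols d V $$ (i,k)"
    using assms lpe_emb_staircase[of V n k d i lam]
    by (simp add: struct_emb_def pad_cols_def staircase_bias_def)
qed (use assms in \<open>auto simp: struct_emb_def pad_cols_def\<close>)

lemma pad_cols_realized_by_lpe:
  assumes "dim_row A = dim_row V" "dim_col V = n"
    and "\<forall>i<dim_row V. \<forall>j<n. \<bar>V $$ (i,j)\<bar> \<le> 1"
  shows "\<exists>phi rho eps degemb ffn. lpe_params_wf d n phi rho eps degemb ffn
    \<and> struct_emb d A V lam phi rho eps degemb ffn = pad_cols d V"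
proof (intro exI conjI)
  show "lpe_params_wf d n (staircase_phi n d) [(1\<^sub>m d, 0\<^sub>v d)] (index_shift n lam)
      (\<lambda>_. 0\<^sub>v d) [(1\<^sub>m d, staircase_bias n d)]"
    by (auto simp: lpe_params_wf_def staircase_phi_def index_shift_def staircase_bias_def)
qed (rule struct_emb_staircase[OF assms])

lemma sufficiently_if_realized:
  assumes "P \<in> carrier_mat (dim_row A) d" "Prop P"
    and "\<exists>phi rho eps degemb ffn. lpe_params_wf d (dim_col V) phi rho eps degemb ffn
      \<and> struct_emb d A V lam phi rho eps degemb ffn = P"
  shows "sufficiently Prop d A V lam"
proof -
  obtain phi rho eps degemb ffn where "lpe_params_wf d (dim_col V) phi rho eps degemb ffn"
    and "struct_emb d A V lam phi rho eps degemb ffn = P"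
    using assms(3) by blast
  moreover have "frob_norm (P - P) = 0" by (simp add: frob_norm_def)
  ultimately have "\<forall>e>0. \<exists>phi rho eps degemb ffn. lpe_params_wf d (dim_col V) phi rho eps degemb ffn
      \<and> frob_norm (P - struct_emb d A V lam phi rho eps degemb ffn) < e"
    by (intro allI impI exI[of _ phi] exI[of _ rho] exI[of _ eps] exI[of _ degemb] exI[of _ ffn])
      auto
  then show ?thesis using assms(1,2) unfolding sufficiently_def by blast
qed

lemma is_eigdecomp_lap_orthogonal:
  assumes "is_graph n A" "is_eigdecomp (lap normalized A) n V lam"
  shows "V \<in> carrier_mat n n" "transpose_mat V * V = 1\<^sub>m n"
proof -
  have "dim_row (lap normalized A) = n"
    using assms(1) by (auto simp: is_graph_def lap_def laplacian_def norm_laplacian_def)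
  then show "V \<in> carrier_mat n n" "transpose_mat V * V = 1\<^sub>m n"
    using assms(2) by (auto simp: is_eigdecomp_def Let_def)
qed

theorem theoremF12:
  fixes n d :: nat and A V :: "real mat" and lam :: "real vec" and normalized :: bool
  assumes "is_graph n A"
    and "is_eigdecomp (lap normalized A) n V lam"
    and "d \<ge> 2 * n + 1"
  shows "sufficiently node_identifying d A V lam
       \<and> sufficiently (adjacency_identifying A) d A V lam"
proof -
  have A: "A \<in> carrier_mat n n" using assms(1) by (simp add: is_graph_def)
  note V = is_eigdecomp_lap_orthogonal[OF assms(1,2)]
  define P where "P = pad_cols d V"
  have P: "P \<in> carrier_mat n d" using V by (simp add: P_def pad_cols_def)
  have "P * transpose_mat P = V * transpose_mat V"
    unfolding P_def using V assms(3) by (simp add: pad_cols_mult_transpose)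
  also have "\<dots> = 1\<^sub>m n"
    using V mat_mult_left_right_inverse[of "transpose_mat V" n V] by simp
  finally have PPt: "P * transpose_mat P = 1\<^sub>m n" .
  have "0 < d" using assms(3) by simp
  then have "node_identifying P" "adjacency_identifying A P"
    using P PPt assms(1)
    by (auto intro: node_identifying_if_row_orthonormal adjacency_identifying_if_row_orthonormal)
  moreover have "\<exists>phi rho eps degemb ffn. lpe_params_wf d (dim_col V) phi rho eps degemb ffn
      \<and> struct_emb d A V lam phi rho eps degemb ffn = P"
    unfolding P_def using A V abs_entry_le_1_if_orthonormal_cols[OF V]
    by (intro pad_cols_realized_by_lpe) auto
  moreover have "P \<in> carrier_mat (dim_row A) d" using P A by simp
  ultimately show ?thesis using sufficiently_if_realized by blast
qed

end
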